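(* Let $X$ and $Y$ be infinite sets with $|X| < |Y|$. Then: (i) every sequence of words that is universal for $I(X)$ is universal for $I(Y)$; (ii) if $2^{\aleph_0} < |X|$, then every sequence of words that is universal for $I(Y)$ is universal for $I(X)$. In particular, if $2^{\aleph_0} < |X| \leq |Y|$, then the sequences universal for $I(X)$ are exactly the sequences universal for $I(Y)$.
   Context: $I(X)$ denotes the symmetric inverse monoid on $X$: all partial permutations of $X$ (bijections between subsets of $X$) under composition of binary relations. For an alphabet $A$ (a finite or countable set), $A^+$ is the free semigroup of non-empty words over $A$. A sequence $w_1, w_2, \ldots \in A^+$ is universal for a semigroup $S$ if for every sequence $s_1, s_2, \ldots \in S$ there is a semigroup homomorphism $\phi: A^+ \to S$ with $(w_n)\phi = s_n$ for all $n \geq 1$. *)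

theory Defs
  imports Main "HOL-Library.Countable_Set"
begin

text \<open>The symmetric inverse monoid I(X): partial bijections between subsets of X,
  represented as partial maps with domain and range inside X, injective on their domain.\<close>
definition sym_inv :: "'a set \<Rightarrow> ('a \<rightharpoonup> 'a) set" where
  "sym_inv X = {f. dom f \<subseteq> X \<and> ran f \<subseteq> X \<and> inj_on f (dom f)}"

text \<open>Composition of binary relations, written left to right: first f, then g.\<close>
definition pcomp :: "('a \<rightharpoonup> 'a) \<Rightarrow> ('a \<rightharpoonup> 'a) \<Rightarrow> ('a \<rightharpoonup> 'a)" where
  "pcomp f g = g \<circ>\<^sub>m f"

text \<open>A semigroup homomorphism from the free semigroup A+ (nonempty lists over A,
  concatenation) into I(X).\<close>
definition word_hom :: "'c set \<Rightarrow> 'a set \<Rightarrow> ('c list \<Rightarrow> ('a \<rightharpoonup> 'a)) \<Rightarrow> bool" where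
  "word_hom A X \<phi> \<longleftrightarrow>
     (\<forall>w. w \<in> lists A \<and> w \<noteq> [] \<longrightarrow> \<phi> w \<in> sym_inv X) \<and>
     (\<forall>u v. u \<in> lists A \<and> u \<noteq> [] \<and> v \<in> lists A \<and> v \<noteq> [] \<longrightarrow>
        \<phi> (u @ v) = pcomp (\<phi> u) (\<phi> v))"

definition universal_for :: "'a set \<Rightarrow> 'c set \<Rightarrow> (nat \<Rightarrow> 'c list) \<Rightarrow> bool" where
  "universal_for X A w \<longleftrightarrow>
     (\<forall>n. w n \<in> lists A \<and> w n \<noteq> []) \<and>
     (\<forall>s. (\<forall>n. s n \<in> sym_inv X) \<longrightarrow>
        (\<exists>\<phi>. word_hom A X \<phi> \<and> (\<forall>n. \<phi> (w n) = s n)))"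

end

theory Submission
  imports Defs "HOL-Library.Countable_Set_Type"
begin

unbundle cardinal_syntax

text \<open>Realizability of sequences of partial bijections by the words is invariant under bijections,
  is inherited by subsets closed under the generators, and survives gluing of realizations on
  disjoint invariant blocks; and the orbits of countably many partial bijections are countable.

  (i) If \<open>|X| \<le> |Y|\<close> and \<open>Y\<close> is uncountable, the \<open>|Y|\<close> orbits of a sequence on \<open>Y\<close> can be grouped
  into invariant blocks of size \<open>|X|\<close>; realize each block as a copy of \<open>X\<close> and glue.

  (ii) Every countable orbit is isomorphic to a structure on a subset of \<open>\<nat>\<close>, and there are only
  \<open>2\<^sup>\<aleph>\<^sup>0\<close> of those. If \<open>|X| > 2\<^sup>\<aleph>\<^sup>0\<close>, the orbits of a sequence on \<open>X\<close> can be grouped into invariant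
  blocks \<open>G\<close> each containing \<open>|G|\<close> copies of one structure \<open>k\<close>. Adding \<open>|Y|\<close> copies of \<open>k\<close> to \<open>G\<close>
  gives a structure of size \<open>|Y|\<close>, which is realized. As the alphabet is countable, the closure of
  \<open>G\<close> under the generators has size \<open>|G|\<close>, so it is \<open>G\<close> plus at most \<open>|G|\<close> extra copies of \<open>k\<close>, hence
  isomorphic to \<open>G\<close>; restricting the homomorphism to it realizes \<open>G\<close>.\<close>

definition sym_inv_seq :: "'a set \<Rightarrow> (nat \<Rightarrow> 'a \<rightharpoonup> 'a) \<Rightarrow> bool" where
  "sym_inv_seq Z s \<longleftrightarrow> (\<forall>n. s n \<in> sym_inv Z)"

definition realizable :: "'c set \<Rightarrow> (nat \<Rightarrow> 'c list) \<Rightarrow> 'a set \<Rightarrow> (nat \<Rightarrow> 'a \<rightharpoonup> 'a) \<Rightarrow> bool" where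
  "realizable A w Z s \<longleftrightarrow> (\<exists>\<phi>. word_hom A Z \<phi> \<and> (\<forall>n. \<phi> (w n) = s n))"

definition all_realizable :: "'c set \<Rightarrow> (nat \<Rightarrow> 'c list) \<Rightarrow> 'a set \<Rightarrow> bool" where
  "all_realizable A w Z \<longleftrightarrow> (\<forall>s. sym_inv_seq Z s \<longrightarrow> realizable A w Z s)"

lemma universal_for_iff_all_realizable:
  "universal_for X A w \<longleftrightarrow> (\<forall>n. w n \<in> lists A \<and> w n \<noteq> []) \<and> all_realizable A w X"
  unfolding universal_for_def all_realizable_def sym_inv_seq_def realizable_def by blast

lemma sym_invD:
  assumes "f \<in> sym_inv Z" and "f x = Some y"
  shows "x \<in> Z" and "y \<in> Z" and "f x' = Some y \<Longrightarrow> x' = x"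
  using assms unfolding sym_inv_def inj_on_def by (auto simp: dom_def ran_def)

lemma sym_invI:
  assumes "\<And>x y. f x = Some y \<Longrightarrow> x \<in> Z \<and> y \<in> Z"
    and "\<And>x x' y. f x = Some y \<Longrightarrow> f x' = Some y \<Longrightarrow> x = x'"
  shows "f \<in> sym_inv Z"
  unfolding sym_inv_def inj_on_def dom_def ran_def using assms by auto

lemma sym_inv_outside: "f \<in> sym_inv Z \<Longrightarrow> x \<notin> Z \<Longrightarrow> f x = None"
  using sym_invD(1) by fastforce

lemma pcomp_apply: "pcomp f g x = (case f x of None \<Rightarrow> None | Some y \<Rightarrow> g y)"
  by (simp add: pcomp_def map_comp_def)

subsection \<open>Transport along bijections\<close>

definition mutually_inverse_on :: "('a \<Rightarrow> 'b) \<Rightarrow> ('b \<Rightarrow> 'a) \<Rightarrow> 'a set \<Rightarrow> 'b set \<Rightarrow> bool" where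
  "mutually_inverse_on h g Z Z' \<longleftrightarrow>
     (\<forall>x\<in>Z. h x \<in> Z' \<and> g (h x) = x) \<and> (\<forall>y\<in>Z'. g y \<in> Z \<and> h (g y) = y)"

definition conj_map :: "('a \<Rightarrow> 'b) \<Rightarrow> ('b \<Rightarrow> 'a) \<Rightarrow> 'b set \<Rightarrow> ('a \<rightharpoonup> 'a) \<Rightarrow> ('b \<rightharpoonup> 'b)" where
  "conj_map h g Z' f = (\<lambda>y. if y \<in> Z' then map_option h (f (g y)) else None)"

lemma mutually_inverse_on_sym: "mutually_inverse_on h g Z Z' \<Longrightarrow> mutually_inverse_on g h Z' Z"
  unfolding mutually_inverse_on_def by blast

lemma mutually_inverse_on_bij_betw:
  assumes h: "bij_betw h Z Z'"
  shows "mutually_inverse_on h (inv_into Z h) Z Z'"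
proof -
  have "inv_into Z h y \<in> Z" if "y \<in> Z'" for y
    using h that inv_into_into[of y h Z] unfolding bij_betw_def by blast
  then show ?thesis
    unfolding mutually_inverse_on_def
    using bij_betw_inv_into_left[OF h] bij_betw_inv_into_right[OF h] bij_betwE[OF h] by blast
qed

lemma conj_map_sym_inv:
  assumes hg: "mutually_inverse_on h g Z Z'" and f: "f \<in> sym_inv Z"
  shows "conj_map h g Z' f \<in> sym_inv Z'"
proof (rule sym_invI)
  fix x y assume "conj_map h g Z' f x = Some y"
  then show "x \<in> Z' \<and> y \<in> Z'"
    using hg sym_invD(1,2)[OF f] unfolding conj_map_def mutually_inverse_on_def by (auto split: if_splits)
next
  fix x x' y assume "conj_map h g Z' f x = Some y" "conj_map h g Z' f x' = Some y"
  then obtain u u' where u: "x \<in> Z'" "x' \<in> Z'" "f (g x) = Some u" "f (g x') = Some u'" "h u = h u'"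
    unfolding conj_map_def by (auto split: if_splits)
  have "u \<in> Z" "u' \<in> Z" using u sym_invD(2)[OF f] by auto
  then have "u = u'" using hg u(5) unfolding mutually_inverse_on_def by metis
  then have "g x' = g x" using u sym_invD(3)[OF f] by simp
  then show "x = x'" using hg u(1,2) unfolding mutually_inverse_on_def by metis
qed

lemma conj_map_pcomp:
  assumes hg: "mutually_inverse_on h g Z Z'" and f: "f \<in> sym_inv Z"
  shows "conj_map h g Z' (pcomp f f') = pcomp (conj_map h g Z' f) (conj_map h g Z' f')"
proof
  fix y show "conj_map h g Z' (pcomp f f') y = pcomp (conj_map h g Z' f) (conj_map h g Z' f') y"
    using hg sym_invD(2)[OF f, of "g y"] unfolding mutually_inverse_on_def
    by (cases "f (g y)") (auto simp: conj_map_def pcomp_apply)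
qed

lemma conj_map_conj_map:
  assumes hg: "mutually_inverse_on h g Z Z'" and f: "f \<in> sym_inv Z"
  shows "conj_map g h Z (conj_map h g Z' f) = f"
proof
  fix x show "conj_map g h Z (conj_map h g Z' f) x = f x"
    using hg sym_invD(1,2)[OF f, of x] unfolding mutually_inverse_on_def conj_map_def
    by (cases "f x") auto
qed

lemma realizable_conj_map:
  assumes hg: "mutually_inverse_on h g Z Z'" and r: "realizable A w Z s"
  shows "realizable A w Z' (\<lambda>n. conj_map h g Z' (s n))"
proof -
  obtain \<phi> where \<phi>: "word_hom A Z \<phi>" "\<forall>n. \<phi> (w n) = s n"
    using r unfolding realizable_def by blast
  have "word_hom A Z' (\<lambda>u. conj_map h g Z' (\<phi> u))"
    using \<phi>(1) conj_map_sym_inv[OF hg] conj_map_pcomp[OF hg] unfolding word_hom_def by simp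
  then show ?thesis using \<phi>(2) unfolding realizable_def by auto
qed

lemma all_realizable_transfer:
  assumes hg: "mutually_inverse_on h g Z Z'" and r: "all_realizable A w Z"
  shows "all_realizable A w Z'"
  unfolding all_realizable_def
proof (intro allI impI)
  fix t assume t: "sym_inv_seq Z' t"
  have gh: "mutually_inverse_on g h Z' Z" using mutually_inverse_on_sym[OF hg] .
  have "sym_inv_seq Z (\<lambda>n. conj_map g h Z (t n))"
    using t conj_map_sym_inv[OF gh] unfolding sym_inv_seq_def by auto
  then have "realizable A w Z (\<lambda>n. conj_map g h Z (t n))"
    using r unfolding all_realizable_def by blast
  from realizable_conj_map[OF hg this] show "realizable A w Z' t"
    using conj_map_conj_map[OF gh] t unfolding sym_inv_seq_def by simp
qed

lemma all_realizable_ordIso: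
  assumes "|Z| =o |Z'|" and "all_realizable A w Z"
  shows "all_realizable A w Z'"
proof -
  obtain h where "bij_betw h Z Z'" using assms(1) card_of_ordIso by blast
  then show ?thesis using all_realizable_transfer mutually_inverse_on_bij_betw assms(2) by blast
qed

subsection \<open>Restriction and gluing\<close>

lemma word_hom_closed:
  assumes h: "word_hom A Z \<phi>"
    and W: "\<forall>a\<in>A. \<forall>x\<in>W. \<forall>y. \<phi> [a] x = Some y \<longrightarrow> y \<in> W"
  shows "u \<in> lists A \<Longrightarrow> u \<noteq> [] \<Longrightarrow> x \<in> W \<Longrightarrow> \<phi> u x = Some y \<Longrightarrow> y \<in> W"
proof (induction u arbitrary: x)
  case (Cons a u)
  show ?case
  proof (cases "u = []")
    case True
    then show ?thesis using Cons.prems W by auto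
  next
    case False
    have "\<phi> ([a] @ u) = pcomp (\<phi> [a]) (\<phi> u)"
      using h False Cons.prems(1) unfolding word_hom_def by (metis Cons_in_lists_iff lists.Nil not_Cons_self)
    with Cons.prems(4) obtain z where z: "\<phi> [a] x = Some z" "\<phi> u z = Some y"
      by (auto simp: pcomp_apply split: option.splits)
    then have "z \<in> W" using W Cons.prems(1,3) by auto
    then show ?thesis using Cons.IH[OF _ False _ z(2)] Cons.prems(1) by simp
  qed
qed simp

lemma word_hom_restrict:
  assumes h: "word_hom A Z \<phi>"
    and W: "\<forall>a\<in>A. \<forall>x\<in>W. \<forall>y. \<phi> [a] x = Some y \<longrightarrow> y \<in> W"
  shows "word_hom A W (\<lambda>u. \<phi> u |` W)"
  unfolding word_hom_def
proof (intro conjI allI impI)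
  fix u assume u: "u \<in> lists A \<and> u \<noteq> []"
  then have f: "\<phi> u \<in> sym_inv Z" using h unfolding word_hom_def by blast
  show "\<phi> u |` W \<in> sym_inv W"
  proof (rule sym_invI)
    fix x y assume "(\<phi> u |` W) x = Some y"
    then have "x \<in> W" "\<phi> u x = Some y" by (auto simp: restrict_map_def split: if_splits)
    then show "x \<in> W \<and> y \<in> W" using word_hom_closed[OF h W] u by blast
  next
    fix x x' y assume "(\<phi> u |` W) x = Some y" "(\<phi> u |` W) x' = Some y"
    then have "\<phi> u x = Some y" "\<phi> u x' = Some y" by (auto simp: restrict_map_def split: if_splits)
    then show "x = x'" using sym_invD(3)[OF f] by metis
  qed
next
  fix u v assume uv: "u \<in> lists A \<and> u \<noteq> [] \<and> v \<in> lists A \<and> v \<noteq> []"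
  then have uv_hom: "\<phi> (u @ v) = pcomp (\<phi> u) (\<phi> v)" using h unfolding word_hom_def by blast
  show "\<phi> (u @ v) |` W = pcomp (\<phi> u |` W) (\<phi> v |` W)"
  proof
    fix x show "(\<phi> (u @ v) |` W) x = pcomp (\<phi> u |` W) (\<phi> v |` W) x"
      using uv_hom word_hom_closed[OF h W] uv
      by (cases "\<phi> u x") (auto simp: pcomp_apply restrict_map_def)
  qed
qed

lemma word_hom_glue:
  assumes \<Phi>: "\<And>j. j \<in> b ` Z \<Longrightarrow> word_hom A {z \<in> Z. b z = j} (\<Phi> j)"
  shows "word_hom A Z (\<lambda>u x. if x \<in> Z then \<Phi> (b x) u x else None)"
    (is "word_hom A Z ?\<psi>")
proof -
  have fibre: "\<Phi> (b x) u \<in> sym_inv {z \<in> Z. b z = b x}"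
    if "u \<in> lists A" "u \<noteq> []" "x \<in> Z" for u x
    using \<Phi>[of "b x"] that unfolding word_hom_def by blast
  show ?thesis
    unfolding word_hom_def
  proof (intro conjI allI impI)
    fix u assume u: "u \<in> lists A \<and> u \<noteq> []"
    have fibre_u: "\<Phi> (b x) u x = Some y \<Longrightarrow> y \<in> Z \<and> b y = b x" if "x \<in> Z" for x y
      using sym_invD(2)[OF fibre[of u x]] u that by simp
    show "?\<psi> u \<in> sym_inv Z"
    proof (rule sym_invI)
      fix x y assume "?\<psi> u x = Some y"
      then have "x \<in> Z" "\<Phi> (b x) u x = Some y" by (auto split: if_splits)
      then show "x \<in> Z \<and> y \<in> Z" using fibre_u by blast
    next
      fix x x' y assume "?\<psi> u x = Some y" "?\<psi> u x' = Some y"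
      then have x: "x \<in> Z" "x' \<in> Z" "\<Phi> (b x) u x = Some y" "\<Phi> (b x') u x' = Some y"
        by (auto split: if_splits)
      have "b x' = b x" using fibre_u[OF x(1) x(3)] fibre_u[OF x(2) x(4)] by simp
      then have "\<Phi> (b x) u x' = Some y" using x(4) by simp
      moreover have f: "\<Phi> (b x) u \<in> sym_inv {z \<in> Z. b z = b x}" using fibre u x(1) by blast
      ultimately show "x = x'" using sym_invD(3)[OF f x(3)] by (metis (no_types))
    qed
  next
    fix u v assume uv: "u \<in> lists A \<and> u \<noteq> [] \<and> v \<in> lists A \<and> v \<noteq> []"
    show "?\<psi> (u @ v) = pcomp (?\<psi> u) (?\<psi> v)"
    proof
      fix x show "?\<psi> (u @ v) x = pcomp (?\<psi> u) (?\<psi> v) x"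
      proof (cases "x \<in> Z")
        case True
        then have uv_hom: "\<Phi> (b x) (u @ v) = pcomp (\<Phi> (b x) u) (\<Phi> (b x) v)"
          using \<Phi>[of "b x"] uv unfolding word_hom_def by blast
        show ?thesis
        proof (cases "\<Phi> (b x) u x")
          case (Some y)
          then have "y \<in> Z" "b y = b x" using sym_invD(2)[OF fibre[of u x] Some] uv True by auto
          then show ?thesis using True Some uv_hom by (simp add: pcomp_apply)
        qed (use True uv_hom in \<open>simp add: pcomp_apply\<close>)
      qed (simp add: pcomp_apply)
    qed
  qed
qed

lemma realizable_glue:
  assumes s: "sym_inv_seq Z s"
    and b: "\<And>n x y. s n x = Some y \<Longrightarrow> b y = b x"
    and r: "\<And>x. x \<in> Z \<Longrightarrow> realizable A w {z \<in> Z. b z = b x} (\<lambda>n. s n |` {z \<in> Z. b z = b x})"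
  shows "realizable A w Z s"
proof -
  have "\<forall>j\<in>b ` Z. \<exists>\<phi>. word_hom A {z \<in> Z. b z = j} \<phi> \<and> (\<forall>n. \<phi> (w n) = s n |` {z \<in> Z. b z = j})"
    using r unfolding realizable_def by blast
  then obtain \<Phi> where \<Phi>: "\<And>j. j \<in> b ` Z \<Longrightarrow>
      word_hom A {z \<in> Z. b z = j} (\<Phi> j) \<and> (\<forall>n. \<Phi> j (w n) = s n |` {z \<in> Z. b z = j})"
    by metis
  have "(\<lambda>x. if x \<in> Z then \<Phi> (b x) (w n) x else None) = s n" for n
  proof
    fix x show "(if x \<in> Z then \<Phi> (b x) (w n) x else None) = s n x"
    proof (cases "x \<in> Z")
      case False
      then show ?thesis using s sym_inv_outside unfolding sym_inv_seq_def by metis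
    qed (use \<Phi> in auto)
  qed
  then show ?thesis
    using word_hom_glue[of b Z A \<Phi>] \<Phi> unfolding realizable_def by blast
qed

subsection \<open>Cardinal bounds\<close>

lemma countable_ordLeq_infinite: "countable C \<Longrightarrow> infinite T \<Longrightarrow> |C| \<le>o |T|"
  using countable_card_of_nat infinite_iff_card_of_nat ordLeq_transitive by metis

lemma card_of_UN_countable_ordLeq:
  assumes "infinite T" and "|I| \<le>o |T|" and "\<And>i. i \<in> I \<Longrightarrow> countable (B i)"
  shows "|\<Union>i\<in>I. B i| \<le>o |T|"
  using assms countable_ordLeq_infinite by (intro card_of_UNION_ordLeq_infinite) auto

lemma card_of_UN_disjoint_countable:
  assumes X: "infinite X" and B: "\<And>x. x \<in> X \<Longrightarrow> countable (B x)" "\<And>x. x \<in> X \<Longrightarrow> B x \<noteq> {}"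
    and disj: "\<And>x x'. x \<in> X \<Longrightarrow> x' \<in> X \<Longrightarrow> B x \<inter> B x' \<noteq> {} \<Longrightarrow> x = x'"
  shows "|\<Union>x\<in>X. B x| =o |X|"
proof -
  have "|\<Union>x\<in>X. B x| \<le>o |X|"
    by (rule card_of_UN_countable_ordLeq[OF X ordLeq_refl[OF card_of_Card_order] B(1)])
  moreover have "|X| \<le>o |\<Union>x\<in>X. B x|"
  proof -
    define e where "e x = (SOME z. z \<in> B x)" for x
    have e: "e x \<in> B x" if "x \<in> X" for x
      using B(2)[OF that] unfolding e_def by (simp add: some_in_eq)
    have "inj_on e X"
    proof
      fix x x' assume x: "x \<in> X" "x' \<in> X" "e x = e x'"
      then have "e x \<in> B x \<inter> B x'" using e[OF x(1)] e[OF x(2)] by simp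
      then show "x = x'" using disj[OF x(1,2)] by blast
    qed
    moreover have "e ` X \<subseteq> (\<Union>x\<in>X. B x)" using e by blast
    ultimately show ?thesis by (intro card_of_ordLeq[THEN iffD1] exI conjI)
  qed
  ultimately show ?thesis by (simp add: ordIso_iff_ordLeq)
qed

lemma card_of_rtrancl_Image_ordLeq:
  fixes S :: "'a rel" and T :: "'b set"
  assumes T: "infinite T" and V: "|V| \<le>o |T|" and S: "\<And>x. countable (S `` {x})"
  shows "|S\<^sup>* `` V| \<le>o |T|"
proof -
  have "countable (S\<^sup>* `` {x})" for x
  proof (rule countable_rtrancl)
    fix Y :: "'a set" assume "countable Y"
    then show "countable (S `` Y)" unfolding Image_eq_UN[of S Y] using S by (rule countable_UN)
  qed simp
  then have "|\<Union>x\<in>V. S\<^sup>* `` {x}| \<le>o |T|" by (rule card_of_UN_countable_ordLeq[OF T V])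
  then show ?thesis by (subst Image_eq_UN)
qed

lemma infinite_UNIV_nat_set: "infinite (UNIV :: nat set set)"
  using Finite_Set.finite_Pow_iff[of "UNIV :: nat set"] by simp

lemma card_of_fibre_pigeonhole:
  assumes T: "infinite T" and f: "|f ` I| \<le>o |T|" and I: "|T| <o |I|"
  obtains k where "k \<in> f ` I" "|T| <o |{i \<in> I. f i = k}|"
proof (rule ccontr)
  assume no_k: "\<not> thesis"
  note k_rule = that
  have "|{i \<in> I. f i = k}| \<le>o |T|" if "k \<in> f ` I" for k
  proof -
    have "\<not> |T| <o |{i \<in> I. f i = k}|" using no_k k_rule that by blast
    then show ?thesis
      using ordLess_or_ordLeq[OF card_of_Well_order card_of_Well_order, of T "{i \<in> I. f i = k}"]
      by blast
  qed
  then have "|\<Union>k\<in>f ` I. {i \<in> I. f i = k}| \<le>o |T|"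
    by (intro card_of_UNION_ordLeq_infinite[OF T f]) blast
  moreover have "(\<Union>k\<in>f ` I. {i \<in> I. f i = k}) = I" by blast
  ultimately show False using not_ordLess_ordLeq[OF I] by simp
qed

lemma card_of_finite_fibres_ordLeq:
  assumes T: "infinite T" and f: "|f ` I| \<le>o |T|"
  shows "|{i \<in> I. finite {i' \<in> I. f i' = f i}}| \<le>o |T|"
proof -
  have eq: "{i \<in> I. finite {i' \<in> I. f i' = f i}} =
      (\<Union>k\<in>{k \<in> f ` I. finite {i \<in> I. f i = k}}. {i \<in> I. f i = k})"
    by auto
  have "|{k \<in> f ` I. finite {i \<in> I. f i = k}}| \<le>o |T|"
    by (rule ordLeq_transitive[OF card_of_mono1 f]) blast
  moreover have "|{i \<in> I. f i = k}| \<le>o |T|" if "finite {i \<in> I. f i = k}" for k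
    using countable_ordLeq_infinite[OF countable_finite[OF that] T] .
  ultimately show ?thesis unfolding eq by (intro card_of_UNION_ordLeq_infinite[OF T]) blast+
qed

subsection \<open>Orbits\<close>

definition orbit_rel :: "(nat \<Rightarrow> 'a \<rightharpoonup> 'a) \<Rightarrow> 'a rel" where
  "orbit_rel s = {(x, y). \<exists>n. s n x = Some y \<or> s n y = Some x}"

definition orbit :: "(nat \<Rightarrow> 'a \<rightharpoonup> 'a) \<Rightarrow> 'a \<Rightarrow> 'a set" where
  "orbit s x = (orbit_rel s)\<^sup>* `` {x}"

lemma orbit_self: "x \<in> orbit s x"
  unfolding orbit_def by simp

lemma orbit_eq: "y \<in> orbit s x \<Longrightarrow> orbit s y = orbit s x"
proof -
  assume "y \<in> orbit s x"
  then have xy: "(x, y) \<in> (orbit_rel s)\<^sup>*" unfolding orbit_def by simp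
  have "sym ((orbit_rel s)\<^sup>*)" by (rule sym_rtrancl) (auto simp: sym_def orbit_rel_def)
  then have "(y, x) \<in> (orbit_rel s)\<^sup>*" using xy by (rule symD)
  show ?thesis
  proof (rule set_eqI)
    fix z
    show "z \<in> orbit s y \<longleftrightarrow> z \<in> orbit s x"
      using rtrancl_trans[OF xy, of z] rtrancl_trans[OF \<open>(y, x) \<in> _\<close>, of z]
      unfolding orbit_def by blast
  qed
qed

lemma orbit_step: "s n x = Some y \<Longrightarrow> orbit s y = orbit s x"
  by (rule orbit_eq) (auto simp: orbit_def orbit_rel_def intro: r_into_rtrancl)

lemma orbit_invariant: "s n y = Some z \<Longrightarrow> y \<in> orbit s x \<longleftrightarrow> z \<in> orbit s x"
  using orbit_step[of s n y z] orbit_eq orbit_self by metis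

lemma orbit_subset:
  assumes s: "sym_inv_seq Z s" and x: "x \<in> Z"
  shows "orbit s x \<subseteq> Z"
proof
  fix y assume "y \<in> orbit s x"
  then have "(x, y) \<in> (orbit_rel s)\<^sup>*" unfolding orbit_def by simp
  then show "y \<in> Z"
  proof (induction rule: rtrancl_induct)
    case (step y z)
    then obtain n where "s n y = Some z \<or> s n z = Some y" unfolding orbit_rel_def by blast
    moreover have "s n \<in> sym_inv Z" using s unfolding sym_inv_seq_def by blast
    ultimately show ?case using sym_invD(1,2) by metis
  qed (rule x)
qed

lemma Union_orbits:
  assumes s: "sym_inv_seq Z s"
  shows "\<Union>(orbit s ` Z) = Z"
proof
  show "Z \<subseteq> \<Union>(orbit s ` Z)"
  proof
    fix x assume "x \<in> Z"
    then show "x \<in> \<Union>(orbit s ` Z)" using orbit_self[of x s] by blast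
  qed
  show "\<Union>(orbit s ` Z) \<subseteq> Z" using orbit_subset[OF s] by (simp add: UN_subset_iff)
qed

lemma countable_orbit:
  assumes s: "sym_inv_seq Z s"
  shows "countable (orbit s x)"
  unfolding orbit_def
proof (rule countable_rtrancl[OF _ countable_insert[OF countable_empty]])
  fix V :: "'a set" assume V: "countable V"
  have preimage: "countable {y. s n y = Some x}" for n x
  proof -
    have "y = (SOME y. s n y = Some x)" if y: "s n y = Some x" for y
    proof -
      have f: "s n \<in> sym_inv Z" using s unfolding sym_inv_seq_def by blast
      have "s n (SOME y. s n y = Some x) = Some x" using y by (rule someI)
      then show ?thesis using sym_invD(3)[OF f _ y] by blast
    qed
    then have "{y. s n y = Some x} \<subseteq> {SOME y. s n y = Some x}" by blast
    then show ?thesis by (rule countable_subset) simp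
  qed
  have "orbit_rel s `` V \<subseteq> (\<Union>x\<in>V. \<Union>n. set_option (s n x) \<union> {y. s n y = Some x})"
    unfolding orbit_rel_def by auto
  moreover have "countable (\<Union>x\<in>V. \<Union>n. set_option (s n x) \<union> {y. s n y = Some x})"
    using V preimage by (intro countable_UN countable_Un) (auto simp: countable_set_option)
  ultimately show "countable (orbit_rel s `` V)" by (rule countable_subset)
qed

lemma card_of_orbits:
  assumes s: "sym_inv_seq Z s" and Z: "uncountable Z"
  shows "infinite (orbit s ` Z)" and "|Z| \<le>o |orbit s ` Z|"
proof -
  define Q where "Q = orbit s ` Z"
  have Q: "countable q" if "q \<in> Q" for q
    using that countable_orbit[OF s] unfolding Q_def by blast
  have Z_eq: "Z = (\<Union>q\<in>Q. q)" unfolding Q_def using Union_orbits[OF s] by simp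
  show "infinite (orbit s ` Z)"
  proof
    assume "finite (orbit s ` Z)"
    then have "countable (\<Union>q\<in>Q. q)" using Q countable_finite unfolding Q_def by (intro countable_UN) auto
    then show False using Z Z_eq by simp
  qed
  then have "|\<Union>q\<in>Q. q| \<le>o |Q|"
    unfolding Q_def by (rule card_of_UN_countable_ordLeq[OF _ ordLeq_refl[OF card_of_Card_order] Q[unfolded Q_def]])
  then show "|Z| \<le>o |orbit s ` Z|" using Z_eq unfolding Q_def by simp
qed

lemma sym_inv_seq_restrict:
  assumes s: "sym_inv_seq Z s" and B: "\<And>n x y. s n x = Some y \<Longrightarrow> x \<in> B \<longleftrightarrow> y \<in> B"
  shows "sym_inv_seq B (\<lambda>n. s n |` B)"
  unfolding sym_inv_seq_def
proof
  fix n
  have f: "s n \<in> sym_inv Z" using s unfolding sym_inv_seq_def by blast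
  show "s n |` B \<in> sym_inv B"
  proof (rule sym_invI)
    fix x y assume "(s n |` B) x = Some y"
    then have "x \<in> B" "s n x = Some y" by (auto simp: restrict_map_def split: if_splits)
    then show "x \<in> B \<and> y \<in> B" using B by blast
  next
    fix x x' y assume "(s n |` B) x = Some y" "(s n |` B) x' = Some y"
    then have "s n x = Some y" "s n x' = Some y" by (auto simp: restrict_map_def split: if_splits)
    then show "x = x'" using sym_invD(3)[OF f] by (metis (no_types))
  qed
qed

subsection \<open>Universality passes to larger sets\<close>

text \<open>A bijection \<open>g : Q \<times> X \<rightarrow> Q\<close> on the set \<open>Q\<close> of orbits splits \<open>Q\<close> into the groups
  \<open>g ({q} \<times> X)\<close> of \<open>|X|\<close> countable orbits each; the block of a point is the group of its orbit.\<close>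

lemma orbit_blocks:
  assumes s: "sym_inv_seq Y s" and X: "infinite X" "|X| \<le>o |Y|" and Y: "uncountable Y"
  obtains b :: "'y \<Rightarrow> 'y set" where "\<And>n x y. s n x = Some y \<Longrightarrow> b y = b x"
    and "\<And>y. y \<in> Y \<Longrightarrow> |{z \<in> Y. b z = b y}| =o |X|"
proof -
  define Q where "Q = orbit s ` Y"
  have Q_orbit: "q = orbit s z" if "q \<in> Q" "z \<in> q" for q z
  proof -
    obtain y where "q = orbit s y" using \<open>q \<in> Q\<close> unfolding Q_def by blast
    then show ?thesis using orbit_eq[of z s y] \<open>z \<in> q\<close> by simp
  qed
  have XQ: "|X| \<le>o |Q|" using ordLeq_transitive[OF X(2) card_of_orbits(2)[OF s Y]] unfolding Q_def .
  have "X \<noteq> {}" using X(1) by auto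
  then have "|Q \<times> X| =o |Q|"
    by (rule card_of_Times_infinite_simps(1)[OF card_of_orbits(1)[OF s Y, folded Q_def] _ XQ])
  then obtain g where g: "bij_betw g (Q \<times> X) Q" using card_of_ordIso by blast
  have g_Q: "g (q, x) \<in> Q" if "q \<in> Q" "x \<in> X" for q x
    using g that bij_betwE by blast
  define b where "b y = fst (inv_into (Q \<times> X) g (orbit s y))" for y
  have b_step: "b y = b x" if "s n x = Some y" for n x y
    unfolding b_def using orbit_step[of s n x y, OF that] by simp
  have b_g: "b z = q" if "q \<in> Q" "x \<in> X" "z \<in> g (q, x)" for q x z
  proof -
    have "orbit s z = g (q, x)" using Q_orbit[OF g_Q that(3)] that by simp
    then show ?thesis unfolding b_def using bij_betw_inv_into_left[OF g] that by simp
  qed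
  have b_Q: "inv_into (Q \<times> X) g (orbit s y) \<in> Q \<times> X \<and> g (inv_into (Q \<times> X) g (orbit s y)) = orbit s y"
    if "y \<in> Y" for y
  proof -
    have "orbit s y \<in> g ` (Q \<times> X)" using that g unfolding Q_def bij_betw_def by blast
    then show ?thesis by (simp add: inv_into_into f_inv_into_f)
  qed
  have fibre: "{z \<in> Y. b z = q} = (\<Union>x\<in>X. g (q, x))" if q: "q \<in> Q" for q
  proof (intro equalityI subsetI)
    fix z assume z: "z \<in> {z \<in> Y. b z = q}"
    define p where "p = inv_into (Q \<times> X) g (orbit s z)"
    have "p \<in> Q \<times> X" "g p = orbit s z" using b_Q[of z] z unfolding p_def by auto
    moreover have "fst p = q" using z unfolding p_def b_def by simp
    ultimately have "snd p \<in> X" "g (q, snd p) = orbit s z" by (metis mem_Sigma_iff prod.collapse)+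
    then show "z \<in> (\<Union>x\<in>X. g (q, x))" using orbit_self[of z s] by blast
  next
    fix z assume "z \<in> (\<Union>x\<in>X. g (q, x))"
    then obtain x where x: "x \<in> X" "z \<in> g (q, x)" by blast
    have "Y = \<Union>Q" unfolding Q_def using Union_orbits[OF s] by simp
    then show "z \<in> {z \<in> Y. b z = q}" using g_Q[OF q x(1)] b_g[OF q x] x(2) by blast
  qed
  have fibre_card: "|{z \<in> Y. b z = q}| =o |X|" if q: "q \<in> Q" for q
    unfolding fibre[OF q]
  proof (rule card_of_UN_disjoint_countable[OF X(1)])
    fix x assume x: "x \<in> X"
    obtain y where y: "g (q, x) = orbit s y" using g_Q[OF q x] unfolding Q_def by blast
    show "countable (g (q, x))" using countable_orbit[OF s, of y] y by simp
    show "g (q, x) \<noteq> {}" using orbit_self[of y s] y by auto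
    fix x' assume x': "x' \<in> X" and "g (q, x) \<inter> g (q, x') \<noteq> {}"
    then obtain z where "z \<in> g (q, x)" "z \<in> g (q, x')" by blast
    then have "g (q, x) = g (q, x')" using Q_orbit[OF g_Q[OF q x]] Q_orbit[OF g_Q[OF q x']] by metis
    then show "x = x'" using g q x x' unfolding bij_betw_def inj_on_def by blast
  qed
  have b_Q': "b y \<in> Q" if "y \<in> Y" for y
    using b_Q[OF that] unfolding b_def by auto
  show thesis
  proof (rule that)
    show "b y = b x" if "s n x = Some y" for n x y using b_step[OF that] .
    show "|{z \<in> Y. b z = b y}| =o |X|" if "y \<in> Y" for y using fibre_card[OF b_Q'[OF that]] .
  qed
qed

lemma all_realizable_mono:
  fixes X :: "'x set" and Y :: "'y set"
  assumes X: "infinite X" and XY: "|X| \<le>o |Y|" and r: "all_realizable A w X"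
  shows "all_realizable A w Y"
proof (cases "countable Y")
  case True
  then have "|X| \<le>o |UNIV :: nat set|"
    using ordLeq_transitive[OF XY] by (simp add: countable_card_of_nat)
  then have "countable X" by (simp add: countable_card_of_nat)
  moreover have "infinite Y" using card_of_ordLeq_infinite[OF XY X] .
  ultimately have "|X| =o |UNIV :: nat set|" "|Y| =o |UNIV :: nat set|"
    using X True countable_or_card_of by blast+
  then have "|X| =o |Y|" by (metis ordIso_transitive ordIso_symmetric)
  then show ?thesis using all_realizable_ordIso r by blast
next
  case False
  show ?thesis
    unfolding all_realizable_def
  proof (intro allI impI)
    fix s assume s: "sym_inv_seq Y s"
    obtain b :: "'y \<Rightarrow> 'y set" where b: "\<And>n x y. s n x = Some y \<Longrightarrow> b y = b x"
      and card: "\<And>y. y \<in> Y \<Longrightarrow> |{z \<in> Y. b z = b y}| =o |X|"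
      using orbit_blocks[OF s X XY False] by blast
    show "realizable A w Y s"
    proof (rule realizable_glue[OF s b])
      fix y assume "y \<in> Y"
      have "all_realizable A w {z \<in> Y. b z = b y}"
        using all_realizable_ordIso[OF ordIso_symmetric[OF card[OF \<open>y \<in> Y\<close>]] r] .
      moreover have "sym_inv_seq {z \<in> Y. b z = b y} (\<lambda>n. s n |` {z \<in> Y. b z = b y})"
      proof (rule sym_inv_seq_restrict[OF s])
        fix n x x' assume x: "s n x = Some x'"
        then have "x \<in> Y" "x' \<in> Y" using s sym_invD(1,2) unfolding sym_inv_seq_def by metis+
        then show "x \<in> {z \<in> Y. b z = b y} \<longleftrightarrow> x' \<in> {z \<in> Y. b z = b y}" using b[OF x] by simp
      qed
      ultimately show "realizable A w {z \<in> Y. b z = b y} (\<lambda>n. s n |` {z \<in> Y. b z = b y})"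
        unfolding all_realizable_def by blast
    qed
  qed
qed

subsection \<open>Disjoint unions of countable structures\<close>

text \<open>Codes for countable structures: partial bijections on a subset of \<open>\<nat>\<close>.\<close>

type_synonym nat_struct = "nat set \<times> (nat \<Rightarrow> nat \<rightharpoonup> nat)"

definition dunion_carrier :: "'i set \<Rightarrow> ('i \<Rightarrow> nat_struct) \<Rightarrow> ('i \<times> nat) set" where
  "dunion_carrier I c = (SIGMA i:I. fst (c i))"

definition dunion_maps :: "'i set \<Rightarrow> ('i \<Rightarrow> nat_struct) \<Rightarrow> nat \<Rightarrow> ('i \<times> nat) \<rightharpoonup> ('i \<times> nat)" where
  "dunion_maps I c n p =
     (if p \<in> dunion_carrier I c then map_option (Pair (fst p)) (snd (c (fst p)) n (snd p)) else None)"

lemma dunion_maps_SomeE: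
  assumes "dunion_maps I c n p = Some p'"
  obtains i t t' where "p = (i, t)" "p' = (i, t')" "i \<in> I" "t \<in> fst (c i)" "snd (c i) n t = Some t'"
  using assms unfolding dunion_maps_def dunion_carrier_def by (cases p) (auto split: if_splits)

lemma sym_inv_seq_dunion:
  assumes c: "\<forall>i\<in>I. sym_inv_seq (fst (c i)) (snd (c i))"
  shows "sym_inv_seq (dunion_carrier I c) (dunion_maps I c)"
  unfolding sym_inv_seq_def
proof
  fix n
  have f: "snd (c i) n \<in> sym_inv (fst (c i))" if "i \<in> I" for i
    using c that unfolding sym_inv_seq_def by blast
  show "dunion_maps I c n \<in> sym_inv (dunion_carrier I c)"
  proof (rule sym_invI)
    fix p p' assume "dunion_maps I c n p = Some p'"
    then obtain i t t' where "p = (i, t)" "p' = (i, t')" "i \<in> I" "t \<in> fst (c i)" "snd (c i) n t = Some t'"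
      by (rule dunion_maps_SomeE)
    moreover have "t' \<in> fst (c i)" using sym_invD(2)[OF f] calculation by blast
    ultimately show "p \<in> dunion_carrier I c \<and> p' \<in> dunion_carrier I c"
      unfolding dunion_carrier_def by simp
  next
    fix p1 p2 p' assume "dunion_maps I c n p1 = Some p'" "dunion_maps I c n p2 = Some p'"
    then obtain i1 t1 t1' i2 t2 t2' where
      "p1 = (i1, t1)" "p' = (i1, t1')" "i1 \<in> I" "snd (c i1) n t1 = Some t1'"
      "p2 = (i2, t2)" "p' = (i2, t2')" "snd (c i2) n t2 = Some t2'"
      by (metis dunion_maps_SomeE)
    then show "p1 = p2" using sym_invD(3)[OF f] by (metis Pair_inject)
  qed
qed

lemma dunion_maps_restrict:
  "I' \<subseteq> I \<Longrightarrow> dunion_maps I c n |` dunion_carrier I' c = dunion_maps I' c n"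
  unfolding dunion_maps_def restrict_map_def dunion_carrier_def by (intro ext) auto

lemma card_of_dunion_carrier_ordLeq:
  assumes I: "infinite I"
  shows "|dunion_carrier I c| \<le>o |I|"
proof -
  have "|dunion_carrier I c| \<le>o |I \<times> (UNIV :: nat set)|"
    unfolding dunion_carrier_def by (rule card_of_mono1) blast
  moreover have "|I \<times> (UNIV :: nat set)| =o |I|"
    using card_of_Times_infinite_simps(1)[OF I _ infinite_iff_card_of_nat[THEN iffD1, OF I]] by simp
  ultimately show ?thesis by (rule ordLeq_ordIso_trans)
qed

lemma realizable_dunion_bij:
  assumes \<beta>: "bij_betw \<beta> I1 I2" and c: "\<And>i. i \<in> I1 \<Longrightarrow> c2 (\<beta> i) = c1 i"
    and r: "realizable A w (dunion_carrier I1 c1) (dunion_maps I1 c1)"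
  shows "realizable A w (dunion_carrier I2 c2) (dunion_maps I2 c2)"
proof -
  define \<gamma> where "\<gamma> = inv_into I1 \<beta>"
  have \<gamma>: "\<gamma> j \<in> I1" "\<beta> (\<gamma> j) = j" "c2 j = c1 (\<gamma> j)" if "j \<in> I2" for j
    using that c bij_betw_inv_into_right[OF \<beta>] bij_betwE[OF bij_betw_inv_into[OF \<beta>]]
    unfolding \<gamma>_def by metis+
  have \<beta>': "\<beta> i \<in> I2" "\<gamma> (\<beta> i) = i" if "i \<in> I1" for i
    using that bij_betwE[OF \<beta>] bij_betw_inv_into_left[OF \<beta>] unfolding \<gamma>_def by blast+
  define h where "h p = (\<beta> (fst p), snd p)" for p :: "_ \<times> nat"
  define g where "g p = (\<gamma> (fst p), snd p)" for p :: "_ \<times> nat"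
  have hg: "mutually_inverse_on h g (dunion_carrier I1 c1) (dunion_carrier I2 c2)"
    unfolding mutually_inverse_on_def h_def g_def dunion_carrier_def using \<gamma> \<beta>' c by auto
  have "conj_map h g (dunion_carrier I2 c2) (dunion_maps I1 c1 n) = dunion_maps I2 c2 n" for n
  proof
    fix p show "conj_map h g (dunion_carrier I2 c2) (dunion_maps I1 c1 n) p = dunion_maps I2 c2 n p"
    proof (cases "p \<in> dunion_carrier I2 c2")
      case True
      then have "fst p \<in> I2" unfolding dunion_carrier_def by auto
      then show ?thesis using True \<gamma>[of "fst p"] unfolding conj_map_def dunion_maps_def
        by (cases "snd (c2 (fst p)) n (snd p)") (auto simp: h_def g_def dunion_carrier_def)
    qed (simp add: conj_map_def dunion_maps_def)
  qed
  then show ?thesis using realizable_conj_map[OF hg r] by simp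
qed

lemma realizable_dunion_glue:
  assumes c: "\<forall>i\<in>I. sym_inv_seq (fst (c i)) (snd (c i))"
    and r: "\<And>i. i \<in> I \<Longrightarrow>
      realizable A w (dunion_carrier {i' \<in> I. b i' = b i} c) (dunion_maps {i' \<in> I. b i' = b i} c)"
  shows "realizable A w (dunion_carrier I c) (dunion_maps I c)"
proof (rule realizable_glue[where b = "b \<circ> fst"])
  show s: "sym_inv_seq (dunion_carrier I c) (dunion_maps I c)" using sym_inv_seq_dunion[OF c] .
  show "(b \<circ> fst) p' = (b \<circ> fst) p" if "dunion_maps I c n p = Some p'" for n p p'
    using that by (auto elim: dunion_maps_SomeE)
  fix p assume "p \<in> dunion_carrier I c"
  then have "fst p \<in> I" unfolding dunion_carrier_def by auto
  have fibre: "{q \<in> dunion_carrier I c. (b \<circ> fst) q = (b \<circ> fst) p} =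
      dunion_carrier {i' \<in> I. b i' = b (fst p)} c"
    unfolding dunion_carrier_def by auto
  show "realizable A w {q \<in> dunion_carrier I c. (b \<circ> fst) q = (b \<circ> fst) p}
      (\<lambda>n. dunion_maps I c n |` {q \<in> dunion_carrier I c. (b \<circ> fst) q = (b \<circ> fst) p})"
    unfolding fibre using r[OF \<open>fst p \<in> I\<close>] by (simp add: dunion_maps_restrict)
qed

lemma realizable_dunion_drop_copies:
  fixes I :: "'i set" and J :: "'j set"
  assumes r: "realizable A w (dunion_carrier (I <+> J) (case_sum c (\<lambda>_. k)))
      (dunion_maps (I <+> J) (case_sum c (\<lambda>_. k)))"
    and K: "K \<subseteq> I" "\<And>i. i \<in> K \<Longrightarrow> c i = k" "infinite K" and JK: "|J| \<le>o |K|"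
  shows "realizable A w (dunion_carrier I c) (dunion_maps I c)"
proof -
  obtain \<beta>0 where \<beta>0: "bij_betw \<beta>0 (K <+> J) K"
    using card_of_ordIso[THEN iffD2, OF card_of_Plus_infinite1[OF K(3) JK]] by blast
  define \<beta> where "\<beta> j = (if j \<in> K <+> J then \<beta>0 j else projl j)" for j
  have "bij_betw \<beta> (K <+> J) K"
    using \<beta>0 by (rule bij_betw_cong[THEN iffD1, rotated]) (simp add: \<beta>_def)
  moreover have "bij_betw \<beta> (Inl ` (I - K)) (I - K)"
    by (rule bij_betw_byWitness[where f' = Inl]) (auto simp: \<beta>_def)
  ultimately have "bij_betw \<beta> ((K <+> J) \<union> Inl ` (I - K)) (K \<union> (I - K))"
    by (rule bij_betw_combine) blast
  moreover have "(K <+> J) \<union> Inl ` (I - K) = I <+> J" "K \<union> (I - K) = I" using K(1) by auto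
  ultimately have \<beta>: "bij_betw \<beta> (I <+> J) I" by simp
  have "c (\<beta> j) = case_sum c (\<lambda>_. k) j" if "j \<in> I <+> J" for j
  proof (cases "j \<in> K <+> J")
    case True
    then have "\<beta> j \<in> K" using \<beta>0 bij_betwE unfolding \<beta>_def by fastforce
    then show ?thesis using True K(2) by auto
  next
    case False
    then show ?thesis using that unfolding \<beta>_def by auto
  qed
  then show ?thesis by (rule realizable_dunion_bij[OF \<beta> _ r])
qed

lemma dunion_carrier_fst_image:
  assumes W: "W \<subseteq> dunion_carrier I c"
    and whole: "\<And>p q. p \<in> W \<Longrightarrow> q \<in> dunion_carrier I c \<Longrightarrow> fst q = fst p \<Longrightarrow> q \<in> W"
  shows "W = dunion_carrier (fst ` W) c"
proof
  show "W \<subseteq> dunion_carrier (fst ` W) c" using W unfolding dunion_carrier_def by force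
  show "dunion_carrier (fst ` W) c \<subseteq> W"
  proof
    fix q assume q: "q \<in> dunion_carrier (fst ` W) c"
    then obtain p where p: "p \<in> W" "fst p = fst q" unfolding dunion_carrier_def by auto
    have "q \<in> dunion_carrier I c" using q p W unfolding dunion_carrier_def by auto
    then show "q \<in> W" using whole p by simp
  qed
qed

text \<open>Close the copies indexed by \<open>I\<^sub>0\<close> under the generators and under passing to whole copies:
  every point has only countably many successors, so the closure is no larger than \<open>I\<^sub>0\<close>.\<close>

lemma dunion_closed_index_set:
  fixes I :: "'i set" and c :: "'i \<Rightarrow> nat_struct"
  assumes h: "word_hom A (dunion_carrier I c) \<phi>" and A: "countable A"
    and I0: "I0 \<subseteq> I" "infinite I0" and ne: "\<And>i. i \<in> I \<Longrightarrow> fst (c i) \<noteq> {}"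
  obtains J where "I0 \<subseteq> J" "J \<subseteq> I" "|J| \<le>o |I0|"
    "\<forall>a\<in>A. \<forall>p\<in>dunion_carrier J c. \<forall>p'. \<phi> [a] p = Some p' \<longrightarrow> p' \<in> dunion_carrier J c"
proof -
  define L where "L = dunion_carrier I c"
  define S where "S = {(p, p'). \<exists>a\<in>A. \<phi> [a] p = Some p'} \<union> {(p, p'). p \<in> L \<and> p' \<in> L \<and> fst p = fst p'}"
  define W where "W = S\<^sup>* `` dunion_carrier I0 c"
  define J where "J = fst ` W"
  have gen_L: "\<phi> [a] \<in> sym_inv L" if "a \<in> A" for a
    using h that unfolding word_hom_def L_def by simp
  have S_L: "p' \<in> L" if "(p, p') \<in> S" for p p'
  proof -
    from that consider a where "a \<in> A" "\<phi> [a] p = Some p'" | "p' \<in> L" unfolding S_def by blast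
    then show ?thesis
    proof cases
      case 1
      from sym_invD(2)[OF gen_L[OF 1(1)] 1(2)] show ?thesis .
    qed
  qed
  have W_L: "W \<subseteq> L"
  proof
    fix p assume "p \<in> W"
    then obtain p0 where p0: "p0 \<in> dunion_carrier I0 c" "(p0, p) \<in> S\<^sup>*" unfolding W_def by blast
    from p0(2) show "p \<in> L"
    proof (induction rule: rtrancl_induct)
      case base then show ?case using p0(1) I0(1) unfolding L_def dunion_carrier_def by blast
    qed (rule S_L)
  qed
  have W_step: "p' \<in> W" if "p \<in> W" "(p, p') \<in> S" for p p'
    using that unfolding W_def by (blast intro: rtrancl_into_rtrancl)
  have W_eq: "W = dunion_carrier J c"
    unfolding J_def
  proof (rule dunion_carrier_fst_image[OF W_L[unfolded L_def]])
    fix p q assume pq: "p \<in> W" "q \<in> dunion_carrier I c" "fst q = fst p"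
    then have "(p, q) \<in> S" using W_L unfolding S_def L_def by auto
    then show "q \<in> W" by (rule W_step[OF pq(1)])
  qed
  have "I0 \<subseteq> J"
  proof
    fix i assume "i \<in> I0"
    then obtain t where "t \<in> fst (c i)" using ne I0(1) by blast
    then have "(i, t) \<in> W" using \<open>i \<in> I0\<close> unfolding W_def dunion_carrier_def by blast
    then show "i \<in> J" unfolding J_def by force
  qed
  moreover have "J \<subseteq> I" using W_L unfolding J_def L_def dunion_carrier_def by auto
  moreover have "|J| \<le>o |I0|"
  proof -
    have W0: "|dunion_carrier I0 c| \<le>o |I0|" by (rule card_of_dunion_carrier_ordLeq[OF I0(2)])
    have "S `` {p} \<subseteq> (\<Union>a\<in>A. set_option (\<phi> [a] p)) \<union> {fst p} \<times> UNIV" for p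
      unfolding S_def by force
    moreover have "countable ((\<Union>a\<in>A. set_option (\<phi> [a] p)) \<union> {fst p} \<times> (UNIV :: nat set))" for p
      using A by (simp add: countable_set_option)
    ultimately have "countable (S `` {p})" for p by (rule countable_subset)
    then have "|W| \<le>o |I0|" unfolding W_def by (rule card_of_rtrancl_Image_ordLeq[OF I0(2) W0])
    then show ?thesis unfolding J_def by (rule ordLeq_transitive[OF card_of_image])
  qed
  moreover have "\<forall>a\<in>A. \<forall>p\<in>W. \<forall>p'. \<phi> [a] p = Some p' \<longrightarrow> p' \<in> W"
    using W_step unfolding S_def by blast
  ultimately show thesis using that W_eq by blast
qed

lemma realizable_dunion_absorb:
  fixes I :: "'i set" and Y :: "'y set" and c :: "'i \<Rightarrow> nat_struct"
  assumes rY: "all_realizable A w Y" and Y: "infinite Y" and A: "countable A"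
    and c: "\<forall>i\<in>I. sym_inv_seq (fst (c i)) (snd (c i)) \<and> fst (c i) \<noteq> {}"
    and K: "K \<subseteq> I" "\<And>i. i \<in> K \<Longrightarrow> c i = k" "infinite K" "|I| \<le>o |K|"
    and IY: "|I| \<le>o |Y|"
  shows "realizable A w (dunion_carrier I c) (dunion_maps I c)"
proof -
  obtain i0 where "i0 \<in> K" using K(3) by (metis finite.emptyI ex_in_conv)
  then have k: "sym_inv_seq (fst k) (snd k)" "fst k \<noteq> {}" using c K(1,2) by auto
  define c' where "c' = case_sum c (\<lambda>_ :: 'y. k)"
  have c': "\<forall>j\<in>I <+> Y. sym_inv_seq (fst (c' j)) (snd (c' j)) \<and> fst (c' j) \<noteq> {}"
    unfolding c'_def using c k by auto
  have IY_inf: "infinite (I <+> Y)" using Y by (simp add: Plus_def finite_image_iff)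
  have "|dunion_carrier (I <+> Y) c'| \<le>o |Y|"
    using ordLeq_ordIso_trans[OF card_of_dunion_carrier_ordLeq[OF IY_inf] card_of_Plus_infinite2[OF Y IY]] .
  moreover have "|Y| \<le>o |dunion_carrier (I <+> Y) c'|"
  proof -
    obtain t0 where "t0 \<in> fst k" using k(2) by blast
    then have "(\<lambda>y. (Inr y, t0)) ` Y \<subseteq> dunion_carrier (I <+> Y) c'"
      unfolding dunion_carrier_def c'_def by auto
    moreover have "inj_on (\<lambda>y. (Inr y :: 'i + 'y, t0)) Y" by (simp add: inj_on_def)
    ultimately show ?thesis by (intro card_of_ordLeq[THEN iffD1] exI conjI)
  qed
  ultimately have "|Y| =o |dunion_carrier (I <+> Y) c'|" by (simp add: ordIso_iff_ordLeq)
  then have "all_realizable A w (dunion_carrier (I <+> Y) c')" by (rule all_realizable_ordIso[OF _ rY])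
  moreover have "sym_inv_seq (dunion_carrier (I <+> Y) c') (dunion_maps (I <+> Y) c')"
    using c' by (intro sym_inv_seq_dunion) blast
  ultimately have "realizable A w (dunion_carrier (I <+> Y) c') (dunion_maps (I <+> Y) c')"
    unfolding all_realizable_def by blast
  then obtain \<phi> where \<phi>: "word_hom A (dunion_carrier (I <+> Y) c') \<phi>"
    "\<And>n. \<phi> (w n) = dunion_maps (I <+> Y) c' n"
    unfolding realizable_def by blast
  have "infinite I" using finite_subset[OF K(1)] K(3) by blast
  then have I0: "Inl ` I \<subseteq> I <+> Y" "infinite (Inl ` I :: ('i + 'y) set)"
    by (auto simp: finite_image_iff)
  have ne: "\<And>j. j \<in> I <+> Y \<Longrightarrow> fst (c' j) \<noteq> {}" using c' by blast
  obtain J where J: "Inl ` I \<subseteq> J" "J \<subseteq> I <+> Y" "|J| \<le>o |Inl ` I :: ('i + 'y) set|"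
    "\<forall>a\<in>A. \<forall>p\<in>dunion_carrier J c'. \<forall>p'. \<phi> [a] p = Some p' \<longrightarrow> p' \<in> dunion_carrier J c'"
    by (rule dunion_closed_index_set[OF \<phi>(1) A I0 ne])
  have "realizable A w (dunion_carrier J c') (dunion_maps J c')"
    unfolding realizable_def
    using word_hom_restrict[OF \<phi>(1) J(4)] by (auto simp: \<phi>(2) dunion_maps_restrict[OF J(2)])
  moreover define Y' where "Y' = {y. Inr y \<in> J}"
  have "J = I <+> Y'" using J(1,2) unfolding Y'_def by auto
  moreover have "|Y'| \<le>o |K|"
  proof -
    have "|Y'| \<le>o |J|"
      unfolding Y'_def by (rule card_of_ordLeq[THEN iffD1], rule exI[of _ Inr]) (auto simp: inj_on_def)
    moreover have "|J| \<le>o |I|" using ordLeq_transitive[OF J(3) card_of_image] .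
    ultimately show ?thesis using ordLeq_transitive K(4) by metis
  qed
  ultimately show ?thesis
    unfolding c'_def by (intro realizable_dunion_drop_copies[OF _ K(1,2,3)]) simp_all
qed

subsection \<open>Universality passes to smaller sets\<close>

definition nat_struct_code :: "nat_struct \<Rightarrow> nat set" where
  "nat_struct_code k = to_nat ` (Inl ` fst k \<union> Inr ` {(n, i, j). snd k n i = Some j})"

lemma inj_nat_struct_code: "inj nat_struct_code"
proof (rule injI)
  fix k1 k2 assume "nat_struct_code k1 = nat_struct_code k2"
  then have eq: "Inl ` fst k1 \<union> Inr ` {(n, i, j). snd k1 n i = Some j} =
      (Inl ` fst k2 \<union> Inr ` {(n, i, j). snd k2 n i = Some j} :: (nat + nat \<times> nat \<times> nat) set)"
    unfolding nat_struct_code_def by (simp add: inj_image_eq_iff[OF inj_to_nat])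
  have "fst k1 = fst k2"
  proof -
    have "Inl x \<in> Inl ` fst k1 \<union> Inr ` {(n, i, j). snd k1 n i = Some j} \<longleftrightarrow> x \<in> fst k1"
      "Inl x \<in> Inl ` fst k2 \<union> Inr ` {(n, i, j). snd k2 n i = Some j} \<longleftrightarrow> x \<in> fst k2" for x
      by auto
    then have "x \<in> fst k1 \<longleftrightarrow> x \<in> fst k2" for x using eq by simp
    then show ?thesis by blast
  qed
  moreover have "snd k1 = snd k2"
  proof (intro ext)
    fix n i
    have "snd k1 n i = Some j \<longleftrightarrow> snd k2 n i = Some j" for j
    proof -
      have "Inr (n, i, j) \<in> Inl ` fst k1 \<union> Inr ` {(n, i, j). snd k1 n i = Some j} \<longleftrightarrow> snd k1 n i = Some j"
        "Inr (n, i, j) \<in> Inl ` fst k2 \<union> Inr ` {(n, i, j). snd k2 n i = Some j} \<longleftrightarrow> snd k2 n i = Some j"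
        by auto
      then show ?thesis using eq by simp
    qed
    then show "snd k1 n i = snd k2 n i" by (metis not_None_eq)
  qed
  ultimately show "k1 = k2" by (rule prod_eqI)
qed

lemma card_of_nat_struct_image_ordLeq: "|c ` I :: nat_struct set| \<le>o |UNIV :: nat set set|"
  using inj_on_subset[OF inj_nat_struct_code subset_UNIV]
  by (intro card_of_ordLeq[THEN iffD1] exI[of _ nat_struct_code]) simp

lemma merge_finite_fibres:
  fixes I :: "'i set" and f :: "'i \<Rightarrow> 'k"
  defines "F k \<equiv> {i \<in> I. f i = k}"
  assumes k0: "infinite (F k0)" and U: "|{i \<in> I. finite (F (f i))}| \<le>o |F k0|"
  defines "b i \<equiv> if finite (F (f i)) then k0 else f i"
  assumes i: "i \<in> I"
  shows "F (b i) \<subseteq> {i' \<in> I. b i' = b i}" and "infinite (F (b i))"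
    and "|{i' \<in> I. b i' = b i}| \<le>o |F (b i)|"
proof -
  show F_inf: "infinite (F (b i))" using k0 unfolding b_def by auto
  show "F (b i) \<subseteq> {i' \<in> I. b i' = b i}"
  proof
    fix i' assume i': "i' \<in> F (b i)"
    show "i' \<in> {i' \<in> I. b i' = b i}"
    proof (cases "finite (F (f i'))")
      case True
      then have "b i = k0" using i' F_inf unfolding F_def by auto
      then show ?thesis using True i' unfolding F_def b_def by simp
    next
      case False
      then show ?thesis using i' unfolding F_def b_def by simp
    qed
  qed
  show "|{i' \<in> I. b i' = b i}| \<le>o |F (b i)|"
  proof (cases "b i = k0")
    case True
    have "{i' \<in> I. b i' = b i} \<subseteq> F k0 \<union> {i \<in> I. finite (F (f i))}"
    proof
      fix i' assume "i' \<in> {i' \<in> I. b i' = b i}"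
      then have "i' \<in> I" "b i' = k0" using True by auto
      then show "i' \<in> F k0 \<union> {i \<in> I. finite (F (f i))}" unfolding F_def b_def by (auto split: if_splits)
    qed
    moreover have "|F k0 \<union> {i \<in> I. finite (F (f i))}| \<le>o |F k0|"
      using card_of_Un_ordLeq_infinite_Field[of "|F k0|" "F k0"] k0 U
      by (simp add: Field_card_of card_of_card_order_on ordLeq_refl)
    ultimately show ?thesis using True ordLeq_transitive[OF card_of_mono1] by blast
  next
    case False
    then have "{i' \<in> I. b i' = b i} \<subseteq> F (b i)" unfolding F_def b_def by auto
    then show ?thesis by (rule card_of_mono1)
  qed
qed

text \<open>Some code \<open>k\<^sub>0\<close> occurs more than \<open>2\<^sup>\<aleph>\<^sup>0\<close> times. Group the indices by code, merging all codes
  that occur only finitely often (at most \<open>2\<^sup>\<aleph>\<^sup>0\<close> indices in total) into the group of \<open>k\<^sub>0\<close>.\<close>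

lemma realizable_dunion_beyond_continuum:
  fixes I :: "'i set" and Y :: "'y set" and c :: "'i \<Rightarrow> nat_struct"
  assumes rY: "all_realizable A w Y" and Y: "infinite Y" and A: "countable A"
    and c: "\<forall>i\<in>I. sym_inv_seq (fst (c i)) (snd (c i)) \<and> fst (c i) \<noteq> {}"
    and I: "|UNIV :: nat set set| <o |I|" and IY: "|I| \<le>o |Y|"
  shows "realizable A w (dunion_carrier I c) (dunion_maps I c)"
proof -
  define F where "F k = {i \<in> I. c i = k}" for k
  note codes = card_of_nat_struct_image_ordLeq[of c I]
  obtain k0 where k0: "|UNIV :: nat set set| <o |F k0|"
    using card_of_fibre_pigeonhole[OF infinite_UNIV_nat_set codes I] unfolding F_def by blast
  have F_k0: "infinite (F k0)"
    using card_of_ordLeq_infinite[OF ordLess_imp_ordLeq[OF k0] infinite_UNIV_nat_set] .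
  have "|{i \<in> I. finite (F (c i))}| \<le>o |UNIV :: nat set set|"
    unfolding F_def by (rule card_of_finite_fibres_ordLeq[OF infinite_UNIV_nat_set codes])
  then have U: "|{i \<in> I. finite (F (c i))}| \<le>o |F k0|"
    using ordLess_imp_ordLeq[OF ordLeq_ordLess_trans[OF _ k0]] by blast
  define b where "b i = (if finite (F (c i)) then k0 else c i)" for i
  show ?thesis
  proof (rule realizable_dunion_glue)
    show "\<forall>i\<in>I. sym_inv_seq (fst (c i)) (snd (c i))" using c by blast
    fix i assume i: "i \<in> I"
    note G = merge_finite_fibres[of I c k0, folded F_def, OF F_k0 U, folded b_def, OF i]
    have "{i' \<in> I. b i' = b i} \<subseteq> I" by blast
    then have "|{i' \<in> I. b i' = b i}| \<le>o |Y|"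
      and "\<forall>i'\<in>{i' \<in> I. b i' = b i}. sym_inv_seq (fst (c i')) (snd (c i')) \<and> fst (c i') \<noteq> {}"
      using ordLeq_transitive[OF card_of_mono1 IY] c by blast+
    moreover have "\<And>i'. i' \<in> F (b i) \<Longrightarrow> c i' = b i" unfolding F_def by blast
    ultimately show "realizable A w (dunion_carrier {i' \<in> I. b i' = b i} c) (dunion_maps {i' \<in> I. b i' = b i} c)"
      using realizable_dunion_absorb[OF rY Y A _ G(1) _ G(2,3)] by blast
  qed
qed

definition nat_struct_of :: "'a set \<Rightarrow> (nat \<Rightarrow> 'a \<rightharpoonup> 'a) \<Rightarrow> nat_struct" where
  "nat_struct_of q s =
     (to_nat_on q ` q, \<lambda>n. conj_map (to_nat_on q) (from_nat_into q) (to_nat_on q ` q) (s n |` q))"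

definition orbit_coords :: "(nat \<Rightarrow> 'a \<rightharpoonup> 'a) \<Rightarrow> 'a \<Rightarrow> 'a set \<times> nat" where
  "orbit_coords s x = (orbit s x, to_nat_on (orbit s x) x)"

lemma mutually_inverse_on_to_nat_on:
  "countable q \<Longrightarrow> mutually_inverse_on (to_nat_on q) (from_nat_into q) q (to_nat_on q ` q)"
  unfolding mutually_inverse_on_def by (auto simp: from_nat_into_to_nat_on)

lemma sym_inv_seq_nat_struct_of:
  assumes s: "sym_inv_seq Z s" and q: "countable q"
    and inv: "\<And>n x y. s n x = Some y \<Longrightarrow> x \<in> q \<longleftrightarrow> y \<in> q"
  shows "sym_inv_seq (fst (nat_struct_of q s)) (snd (nat_struct_of q s))"
  using sym_inv_seq_restrict[OF s inv] conj_map_sym_inv[OF mutually_inverse_on_to_nat_on[OF q]]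
  unfolding nat_struct_of_def sym_inv_seq_def by simp

lemma mutually_inverse_on_orbit_coords:
  assumes s: "sym_inv_seq X s"
  shows "mutually_inverse_on (case_prod from_nat_into) (orbit_coords s)
      (dunion_carrier (orbit s ` X) (\<lambda>q. nat_struct_of q s)) X"
  unfolding mutually_inverse_on_def
proof (intro conjI ballI)
  fix p assume "p \<in> dunion_carrier (orbit s ` X) (\<lambda>q. nat_struct_of q s)"
  then obtain x y where p: "x \<in> X" "y \<in> orbit s x" "p = (orbit s x, to_nat_on (orbit s x) y)"
    unfolding dunion_carrier_def nat_struct_of_def by auto
  then have "case_prod from_nat_into p = y" using countable_orbit[OF s] by simp
  moreover have "orbit s y = orbit s x" using orbit_eq p(2) .
  ultimately show "case_prod from_nat_into p \<in> X" "orbit_coords s (case_prod from_nat_into p) = p"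
    using p orbit_subset[OF s] unfolding orbit_coords_def by auto
next
  fix x assume "x \<in> X"
  then show "orbit_coords s x \<in> dunion_carrier (orbit s ` X) (\<lambda>q. nat_struct_of q s)"
    "case_prod from_nat_into (orbit_coords s x) = x"
    unfolding orbit_coords_def dunion_carrier_def nat_struct_of_def
    using orbit_self[of x s] countable_orbit[OF s, of x] by auto
qed

lemma conj_map_orbit_coords:
  assumes s: "sym_inv_seq X s"
  shows "conj_map (case_prod from_nat_into) (orbit_coords s) X
      (dunion_maps (orbit s ` X) (\<lambda>q. nat_struct_of q s) n) = s n"
proof
  fix x
  show "conj_map (case_prod from_nat_into) (orbit_coords s) X
      (dunion_maps (orbit s ` X) (\<lambda>q. nat_struct_of q s) n) x = s n x"
  proof (cases "x \<in> X")
    case True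
    have x: "x \<in> orbit s x" "countable (orbit s x)" using orbit_self countable_orbit[OF s] .
    have "orbit_coords s x \<in> dunion_carrier (orbit s ` X) (\<lambda>q. nat_struct_of q s)"
      using True x unfolding orbit_coords_def dunion_carrier_def nat_struct_of_def by auto
    moreover have "from_nat_into (orbit s x) (to_nat_on (orbit s x) y) = y" if "s n x = Some y" for y
      using x orbit_invariant[of s n x y x, OF that] by simp
    ultimately show ?thesis
      using True x unfolding conj_map_def dunion_maps_def nat_struct_of_def orbit_coords_def
      by (cases "s n x") auto
  next
    case False
    then show ?thesis using s sym_inv_outside unfolding conj_map_def sym_inv_seq_def by metis
  qed
qed

lemma all_realizable_antimono:
  fixes X :: "'x set" and Y :: "'y set"
  assumes X: "|UNIV :: nat set set| <o |X|" and XY: "|X| \<le>o |Y|"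
    and rY: "all_realizable A w Y" and A: "countable A"
  shows "all_realizable A w X"
  unfolding all_realizable_def
proof (intro allI impI)
  fix s assume s: "sym_inv_seq X s"
  have "uncountable X"
  proof
    assume "countable X"
    then have "|X| \<le>o |UNIV :: nat set set|" by (rule countable_ordLeq_infinite[OF _ infinite_UNIV_nat_set])
    then show False using not_ordLess_ordLeq[OF X] by contradiction
  qed
  then have "|UNIV :: nat set set| <o |orbit s ` X|"
    by (rule ordLess_ordLeq_trans[OF X card_of_orbits(2)[OF s]])
  moreover have "|orbit s ` X| \<le>o |Y|" using ordLeq_transitive[OF card_of_image XY] .
  moreover have "infinite Y"
    using card_of_ordLeq_infinite[OF XY uncountable_infinite[OF \<open>uncountable X\<close>]] .
  moreover have "\<forall>q\<in>orbit s ` X. sym_inv_seq (fst (nat_struct_of q s)) (snd (nat_struct_of q s))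
      \<and> fst (nat_struct_of q s) \<noteq> {}"
  proof
    fix q assume "q \<in> orbit s ` X"
    then obtain x where q: "q = orbit s x" by blast
    have "sym_inv_seq (fst (nat_struct_of q s)) (snd (nat_struct_of q s))"
      unfolding q by (rule sym_inv_seq_nat_struct_of[OF s countable_orbit[OF s] orbit_invariant])
    moreover have "fst (nat_struct_of q s) \<noteq> {}"
      unfolding q nat_struct_of_def using orbit_self[of x s] by auto
    ultimately show "sym_inv_seq (fst (nat_struct_of q s)) (snd (nat_struct_of q s))
      \<and> fst (nat_struct_of q s) \<noteq> {}" ..
  qed
  ultimately have "realizable A w (dunion_carrier (orbit s ` X) (\<lambda>q. nat_struct_of q s))
      (dunion_maps (orbit s ` X) (\<lambda>q. nat_struct_of q s))"
    by (intro realizable_dunion_beyond_continuum[OF rY _ A])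
  from realizable_conj_map[OF mutually_inverse_on_orbit_coords[OF s] this]
  show "realizable A w X s" by (simp add: conj_map_orbit_coords[OF s])
qed

theorem corollary2p3:
  fixes X :: "'x set" and Y :: "'y set"
  assumes "infinite X" and "infinite Y"
  shows "((card_of X, card_of Y) \<in> ordLess \<longrightarrow>
            (\<forall>(A :: 'c set) w. countable A \<longrightarrow> universal_for X A w \<longrightarrow> universal_for Y A w))
       \<and> ((card_of X, card_of Y) \<in> ordLess \<and> (card_of (UNIV :: nat set set), card_of X) \<in> ordLess \<longrightarrow>
            (\<forall>(A :: 'c set) w. countable A \<longrightarrow> universal_for Y A w \<longrightarrow> universal_for X A w))
       \<and> ((card_of (UNIV :: nat set set), card_of X) \<in> ordLess \<and> (card_of X, card_of Y) \<in> ordLeq \<longrightarrow>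
            (\<forall>(A :: 'c set) w. countable A \<longrightarrow> (universal_for X A w \<longleftrightarrow> universal_for Y A w)))"
proof -
  have up: "universal_for Y A w" if "|X| \<le>o |Y|" "universal_for X A w" for A :: "'c set" and w
    using all_realizable_mono[OF assms(1) that(1)] that(2) unfolding universal_for_iff_all_realizable by blast
  have down: "universal_for X A w"
    if "|UNIV :: nat set set| <o |X|" "|X| \<le>o |Y|" "countable A" "universal_for Y A w"
    for A :: "'c set" and w
    using all_realizable_antimono[OF that(1,2) _ that(3)] that(4)
    unfolding universal_for_iff_all_realizable by blast
  show ?thesis
  proof (intro conjI impI allI)
    fix A :: "'c set" and w
    assume "|X| <o |Y|" "countable A" "universal_for X A w"
    then show "universal_for Y A w" using up[OF ordLess_imp_ordLeq] by blast
  next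
    fix A :: "'c set" and w
    assume "|X| <o |Y| \<and> |UNIV :: nat set set| <o |X|" "countable A" "universal_for Y A w"
    then show "universal_for X A w" using down[OF _ ordLess_imp_ordLeq] by blast
  next
    fix A :: "'c set" and w
    assume "|UNIV :: nat set set| <o |X| \<and> |X| \<le>o |Y|" "countable A"
    then show "universal_for X A w \<longleftrightarrow> universal_for Y A w" using up down by blast
  qed
qed

end
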